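(* Let $r,s\in(0,1)$ satisfy \[s = 2r(1-r)\qquad\text{and}\qquad r = 3s(1-s)^2 + 3s^2(1-s).\] Then the product measures $\mu_r$ and $\mu_s$ on $\Omega=\{0,1\}^{\mathbb{N}}$ are not homeomorphic; that is, there is no homeomorphism $h:\Omega\to\Omega$ with $\mu_s = \mu_r\circ h^{-1}$ (i.e. $\mu_s(A)=\mu_r(h^{-1}(A))$ for all Borel $A\subseteq\Omega$).
   Context: $\Omega=\{0,1\}^{\mathbb{N}}$ is the Cantor set with the product topology. For $r\in[0,1]$, $\lambda_r$ is the probability measure on $\{0,1\}$ with $\lambda_r\{1\}=r$, $\lambda_r\{0\}=1-r$, and $\mu_r$ is the infinite product measure $\lambda_r^{\mathbb{N}}$ on $\Omega$ (the Bernoulli measure). Two Borel measures $\mu,\nu$ on $\Omega$ are called homeomorphic if there is a homeomorphism $h$ of $\Omega$ onto itself with $\nu=\mu\circ h^{-1}$. *)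

theory Defs
  imports "HOL-Probability.Probability"
begin

text \<open>The Cantor set \<Omega> = {0,1}^\<nat> is represented by the type nat \<Rightarrow> bool
  (True = 1, False = 0), with the product topology of discrete two-point spaces.\<close>

definition Cantor_top :: "(nat \<Rightarrow> bool) topology" where
  "Cantor_top = product_topology (\<lambda>_. discrete_topology (UNIV :: bool set)) UNIV"

definition bernoulli_measure :: "real \<Rightarrow> (nat \<Rightarrow> bool) measure" where
  "bernoulli_measure r = PiM UNIV (\<lambda>_. measure_pmf (bernoulli_pmf r))"

end

theory Submission
  imports Defs "HOL-Computational_Algebra.Polynomial" "HOL-Number_Theory.Cong"
begin

text \<open>
  Every clopen subset of the Cantor space depends on finitely many coordinates, so its
  mu_t-measure is a polynomial in t with integer coefficients. The hypotheses force
  12 r^3 - 24 r^2 + 18 r - 5 = 0; this cubic has no rational root, hence is the minimal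
  polynomial of r, and since it vanishes at 10 modulo 25 while 12 is invertible modulo 25,
  sending r to 10 is a well-defined ring homomorphism from \<int>[r] to \<int>/25. It sends
  s = 2 r (1 - r) to -180, which is 20 modulo 25.

  Suppose h carries mu_r to mu_s, and let C_M be the cylinder of sequences starting with
  1 0 ... 0 (M digits), so that mu_r(C_M) = r (1 - r)^(M-1) is sent to 10 (-9)^(M-1), which is
  10 modulo 25. The image h(C_M) is clopen, so mu_s(h(C_M)) is a sum of cylinder weights
  s^k (1 - s)^(m-k). Modulo 25 such a weight vanishes for k >= 2, is 20 for k = 1, and is a unit
  modulo 5 for k = 0. Hence h(C_M) avoids the zero sequence and contains at least two unit
  sequences e_j. But the zero sequence is not in the clopen set h(C_1), so only finitely many
  e_j lie in it, and as the C_M shrink to the point e_0 the sets h(C_M) eventually contain no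
  e_j other than h(e_0).
\<close>

lemma map_poly_of_int_add:
  "map_poly of_int (p + q) = map_poly of_int p + (map_poly of_int q :: 'a::ring_1 poly)"
  by (rule poly_eqI) (simp add: coeff_map_poly)

lemma map_poly_of_int_diff:
  "map_poly of_int (p - q) = map_poly of_int p - (map_poly of_int q :: 'a::ring_1 poly)"
  by (rule poly_eqI) (simp add: coeff_map_poly)

lemma map_poly_of_int_mult:
  "map_poly of_int (p * q) = map_poly of_int p * (map_poly of_int q :: 'a::comm_ring_1 poly)"
  by (rule poly_eqI) (simp add: coeff_map_poly coeff_mult)

lemma map_poly_of_rat_add:
  "map_poly of_rat (p + q) = map_poly of_rat p + (map_poly of_rat q :: 'a::field_char_0 poly)"
  by (rule poly_eqI) (simp add: coeff_map_poly of_rat_add)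

lemma map_poly_of_rat_mult:
  "map_poly of_rat (p * q) = map_poly of_rat p * (map_poly of_rat q :: 'a::field_char_0 poly)"
  by (rule poly_eqI) (simp add: coeff_map_poly coeff_mult of_rat_sum of_rat_mult)

lemma poly_map_poly_of_rat_of_rat:
  "poly (map_poly of_rat p) (of_rat x) = (of_rat (poly p x) :: 'a::field_char_0)"
  by (induction p) (auto simp: map_poly_pCons of_rat_add of_rat_mult)

lemma poly_eq_linear:
  fixes p :: "'a::comm_semiring_1 poly"
  assumes "degree p \<le> 1"
  shows "poly p x = coeff p 0 + coeff p 1 * x"
proof -
  have "poly p x = (\<Sum>i\<le>1. coeff p i * x ^ i)"
    unfolding poly_altdef using assms by (intro sum.mono_neutral_left) (auto simp: coeff_eq_0)
  then show ?thesis
    by simp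
qed

lemma rat_poly_linear_root_eq_0:
  fixes \<alpha> :: "'a::field_char_0"
  assumes "\<alpha> \<notin> \<rat>" "degree q \<le> 1" "poly (map_poly of_rat q) \<alpha> = 0"
  shows "q = 0"
proof -
  have root: "of_rat (coeff q 0) + of_rat (coeff q 1) * \<alpha> = 0"
    using assms(2,3) poly_eq_linear[of "map_poly of_rat q" \<alpha>]
    by (simp add: coeff_map_poly degree_map_poly)
  have "coeff q 1 = 0"
  proof (rule ccontr)
    assume "coeff q 1 \<noteq> 0"
    with root have "\<alpha> = of_rat (- coeff q 0 / coeff q 1)"
      by (simp add: of_rat_divide of_rat_minus eq_neg_iff_add_eq_0 field_simps)
    with assms(1) show False
      by simp
  qed
  with root have "coeff q 0 = 0"
    by simp
  with \<open>coeff q 1 = 0\<close> assms(2) show "q = 0"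
    by (metis One_nat_def le_Suc_eq le_zero_eq leading_coeff_0_iff)
qed

lemma no_rational_root_imp_irrational:
  fixes F :: "rat poly" and \<alpha> :: "'a::field_char_0"
  assumes "\<And>x. poly F x \<noteq> 0" "poly (map_poly of_rat F) \<alpha> = 0"
  shows "\<alpha> \<notin> \<rat>"
proof
  assume "\<alpha> \<in> \<rat>"
  then obtain x where "\<alpha> = of_rat x"
    by (auto elim: Rats_cases)
  with assms show False
    by (simp add: poly_map_poly_of_rat_of_rat)
qed

lemma no_rational_root_cubic_minimal:
  fixes F q :: "rat poly" and \<alpha> :: "'a::field_char_0"
  assumes F: "degree F \<le> 3" "\<And>x. poly F x \<noteq> 0" "poly (map_poly of_rat F) \<alpha> = 0"
    and q: "degree q < degree F" "poly (map_poly of_rat q) \<alpha> = 0"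
  shows "q = 0"
proof (rule ccontr)
  assume "q \<noteq> 0"
  have irrational: "\<alpha> \<notin> \<rat>"
    using no_rational_root_imp_irrational F(2,3) .
  have "degree q = 2"
    using rat_poly_linear_root_eq_0[OF irrational _ q(2)] \<open>q \<noteq> 0\<close> F(1) q(1) by linarith
  define d where "d = F div q"
  have "poly (map_poly of_rat F) \<alpha>
      = poly (map_poly of_rat d) \<alpha> * poly (map_poly of_rat q) \<alpha> + poly (map_poly of_rat (F mod q)) \<alpha>"
    unfolding d_def by (metis div_mult_mod_eq map_poly_of_rat_add map_poly_of_rat_mult poly_add poly_mult)
  then have "poly (map_poly of_rat (F mod q)) \<alpha> = 0"
    using F(3) q(2) by simp
  moreover have "degree (F mod q) \<le> 1"
    using degree_mod_less[OF \<open>q \<noteq> 0\<close>, of F] \<open>degree q = 2\<close> by (cases "F mod q = 0") auto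
  ultimately have "F mod q = 0"
    using rat_poly_linear_root_eq_0[OF irrational] by blast
  then have F_eq: "F = d * q"
    using div_mult_mod_eq[of F q] unfolding d_def by simp
  have "F \<noteq> 0"
    using F(2)[of 0] by auto
  then have "degree d = 1"
    using F(1) q(1) \<open>degree q = 2\<close> unfolding F_eq by (simp add: degree_mult_eq)
  then have "coeff d 1 \<noteq> 0"
    by (metis leading_coeff_0_iff degree_0 zero_neq_one)
  then have "poly d (- coeff d 0 / coeff d 1) = 0"
    using poly_eq_linear[of d] \<open>degree d = 1\<close> by simp
  then show False
    using F(2)[of "- coeff d 0 / coeff d 1"] unfolding F_eq by simp
qed

section \<open>Reducing \<int>[\<alpha>] modulo n\<close>

text \<open>Under these assumptions \<alpha> \<mapsto> a induces a ring homomorphism \<int>[\<alpha>] \<rightarrow> \<int>/n;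
  has_residue x k says that x lies in \<int>[\<alpha>] and is mapped to k.\<close>

locale root_residue =
  fixes F :: "int poly" and \<alpha> :: "'a::comm_ring_1" and a n :: int
  assumes root: "poly (map_poly of_int F) \<alpha> = 0"
    and minimal: "\<And>q. poly (map_poly of_int q) \<alpha> = 0 \<Longrightarrow> degree q < degree F \<Longrightarrow> q = 0"
    and coprime_lead_coeff: "coprime (lead_coeff F) n"
    and root_cong: "[poly F a = 0] (mod n)"
begin

lemma root_imp_cong_0: "poly (map_poly of_int p) \<alpha> = 0 \<Longrightarrow> [poly p a = 0] (mod n)"
proof (induction "degree p" arbitrary: p rule: less_induct)
  case less
  show ?case
  proof (cases "degree p < degree F")
    case True
    then have "p = 0"
      using minimal less.prems by blast
    then show ?thesis
      by simp
  next
    case False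
    define k where "k = degree p - degree F"
    define q where "q = smult (lead_coeff F) p - monom (lead_coeff p) k * F"
    have "degree (monom (lead_coeff p) k * F) \<le> k + degree F"
      using degree_mult_le[of "monom (lead_coeff p) k" F] degree_monom_le[of "lead_coeff p" k]
      by linarith
    also have "k + degree F = degree p"
      using False unfolding k_def by simp
    finally have "degree q \<le> degree p"
      unfolding q_def by (intro degree_diff_le) (auto intro: order_trans[OF degree_smult_le])
    moreover have "coeff q (degree p) = 0"
      using False unfolding q_def k_def by (simp add: coeff_monom_mult)
    moreover have "poly (map_poly of_int q) \<alpha> = 0"
      using less.prems root unfolding q_def
      by (simp add: map_poly_of_int_diff map_poly_of_int_mult map_poly_smult map_poly_monom)
    ultimately have q_cong: "[poly q a = 0] (mod n)"
      using less.hyps degree_less_if_less_eqI[of q p] by (cases "q = 0") auto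
    have F_cong: "[lead_coeff p * a ^ k * poly F a = 0] (mod n)"
      using cong_scalar_left[OF root_cong, of "lead_coeff p * a ^ k"] by simp
    have "poly q a + lead_coeff p * a ^ k * poly F a = lead_coeff F * poly p a"
      unfolding q_def by (simp add: poly_monom)
    then have "[lead_coeff F * poly p a = lead_coeff F * 0] (mod n)"
      using cong_add[OF q_cong F_cong] by simp
    then show ?thesis
      using coprime_lead_coeff cong_mult_lcancel by blast
  qed
qed

definition has_residue :: "'a \<Rightarrow> int \<Rightarrow> bool" where
  "has_residue x k \<longleftrightarrow> (\<exists>p. x = poly (map_poly of_int p) \<alpha> \<and> [poly p a = k] (mod n))"

lemma has_residue_unique:
  assumes "has_residue x k" "has_residue x l"
  shows "[k = l] (mod n)"
proof -
  obtain p q where p: "x = poly (map_poly of_int p) \<alpha>" "[poly p a = k] (mod n)"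
    and q: "x = poly (map_poly of_int q) \<alpha>" "[poly q a = l] (mod n)"
    using assms unfolding has_residue_def by blast
  have "poly (map_poly of_int (p - q)) \<alpha> = 0"
    using p(1) q(1) by (simp add: map_poly_of_int_diff)
  then have "[poly p a - poly q a = 0] (mod n)"
    using root_imp_cong_0 by fastforce
  then have "[poly p a = poly q a] (mod n)"
    by (simp add: cong_diff_iff_cong_0)
  then show ?thesis
    using p(2) q(2) by (metis cong_def)
qed

lemma has_residue_of_int: "has_residue (of_int c) c"
  unfolding has_residue_def by (intro exI[of _ "[:c:]"]) (simp add: map_poly_pCons)

lemma has_residue_root: "has_residue \<alpha> a"
  unfolding has_residue_def by (intro exI[of _ "[:0, 1:]"]) (simp add: map_poly_pCons)

lemma has_residue_add:
  assumes "has_residue x k" "has_residue y l"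
  shows "has_residue (x + y) (k + l)"
proof -
  obtain p q where "x = poly (map_poly of_int p) \<alpha>" "[poly p a = k] (mod n)"
    "y = poly (map_poly of_int q) \<alpha>" "[poly q a = l] (mod n)"
    using assms unfolding has_residue_def by blast
  then show ?thesis
    unfolding has_residue_def
    by (intro exI[of _ "p + q"]) (auto simp: map_poly_of_int_add intro: cong_add)
qed

lemma has_residue_diff:
  assumes "has_residue x k" "has_residue y l"
  shows "has_residue (x - y) (k - l)"
proof -
  obtain p q where "x = poly (map_poly of_int p) \<alpha>" "[poly p a = k] (mod n)"
    "y = poly (map_poly of_int q) \<alpha>" "[poly q a = l] (mod n)"
    using assms unfolding has_residue_def by blast
  then show ?thesis
    unfolding has_residue_def
    by (intro exI[of _ "p - q"]) (auto simp: map_poly_of_int_diff intro: cong_diff)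
qed

lemma has_residue_mult:
  assumes "has_residue x k" "has_residue y l"
  shows "has_residue (x * y) (k * l)"
proof -
  obtain p q where "x = poly (map_poly of_int p) \<alpha>" "[poly p a = k] (mod n)"
    "y = poly (map_poly of_int q) \<alpha>" "[poly q a = l] (mod n)"
    using assms unfolding has_residue_def by blast
  then show ?thesis
    unfolding has_residue_def
    by (intro exI[of _ "p * q"]) (auto simp: map_poly_of_int_mult intro: cong_mult)
qed

lemma has_residue_sum:
  "(\<And>i. i \<in> I \<Longrightarrow> has_residue (f i) (g i)) \<Longrightarrow> has_residue (\<Sum>i\<in>I. f i) (\<Sum>i\<in>I. g i)"
  using has_residue_of_int[of 0]
  by (induction I rule: infinite_finite_induct) (auto intro: has_residue_add)

lemma has_residue_prod:
  "(\<And>i. i \<in> I \<Longrightarrow> has_residue (f i) (g i)) \<Longrightarrow> has_residue (\<Prod>i\<in>I. f i) (\<Prod>i\<in>I. g i)"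
  using has_residue_of_int[of 1]
  by (induction I rule: infinite_finite_induct) (auto intro: has_residue_mult)

end

definition cubic :: "int poly" where
  "cubic = [:-5, 18, -24, 12:]"

lemma poly_cubic:
  "poly (map_poly of_int cubic) x = 12 * x^3 - 24 * x^2 + 18 * x - (5 :: 'a::comm_ring_1)"
  by (simp add: cubic_def map_poly_pCons algebra_simps power2_eq_square power3_eq_cube)

lemma degree_cubic: "degree cubic = 3"
  by (simp add: cubic_def)

text \<open>This is Eisenstein's criterion at 3 for the reversed polynomial -5 y^3 + 18 y^2 - 24 y + 12.\<close>

lemma cubic_no_rational_root: "poly (map_poly of_int cubic) (x :: rat) \<noteq> 0"
proof
  assume root: "poly (map_poly of_int cubic) x = 0"
  obtain a b where ab: "quotient_of x = (a, b)"
    by (cases "quotient_of x")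
  have "b > 0" "coprime a b" and x: "x = of_int a / of_int b"
    using ab by (simp_all add: quotient_of_denom_pos quotient_of_coprime quotient_of_div)
  then have "of_int (12 * a^3 - 24 * a^2 * b + 18 * a * b^2 - 5 * b^3)
      = (of_int b)^3 * poly (map_poly of_int cubic) x"
    unfolding x poly_cubic by (simp add: field_simps power2_eq_square power3_eq_cube)
  then have eq: "12 * a^3 - 24 * a^2 * b + 18 * a * b^2 - 5 * b^3 = 0"
    unfolding root of_int_eq_0_iff[symmetric, where 'a = rat] by simp
  have prime_3: "prime (3 :: int)"
    by simp
  have "5 * b^3 = 3 * (4 * a^3 - 8 * a^2 * b + 6 * a * b^2)"
    using eq by algebra
  then have "3 dvd 5 * b^3"
    by simp
  then have "3 dvd b"
    using prime_3 by (simp add: prime_dvd_mult_iff prime_dvd_power_iff)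
  then obtain c where "b = 3 * c" ..
  then have "4 * a^3 = 3 * (8 * a^2 * c - 18 * a * c^2 + 15 * c^3)"
    using eq by algebra
  then have "3 dvd 4 * a^3"
    by simp
  then have "3 dvd a"
    using prime_3 by (simp add: prime_dvd_mult_iff prime_dvd_power_iff)
  with \<open>3 dvd b\<close> \<open>coprime a b\<close> show False
    using coprime_common_divisor prime_3 not_prime_unit by blast
qed

lemma root_residue_cubic:
  fixes r :: real
  assumes "12 * r^3 - 24 * r^2 + 18 * r - 5 = 0"
  shows "root_residue cubic r 10 25"
proof
  show root: "poly (map_poly of_int cubic) r = 0"
    using assms by (simp add: poly_cubic)
  show "coprime (lead_coeff cubic) 25" "[poly cubic 10 = 0] (mod 25)"
    by (simp_all add: cubic_def cong_def coprime_iff_gcd_eq_1 gcd_non_0_int)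
  fix q :: "int poly"
  assume "poly (map_poly of_int q) r = 0" "degree q < degree cubic"
  then have "map_poly (of_int :: int \<Rightarrow> rat) q = 0"
    using no_rational_root_cubic_minimal[where F = "map_poly of_int cubic" and q = "map_poly of_int q"
        and \<alpha> = r] cubic_no_rational_root
    by (simp add: map_poly_map_poly o_def degree_map_poly root degree_cubic)
  then show "q = 0"
    by (simp add: map_poly_eq_0_iff)
qed

definition bernoulli_weight :: "'a::comm_ring_1 \<Rightarrow> nat \<Rightarrow> (nat \<Rightarrow> bool) \<Rightarrow> 'a" where
  "bernoulli_weight t m w = (\<Prod>i<m. if w i then t else 1 - t)"

lemma bernoulli_weight_eq_power:
  "bernoulli_weight t m w = t ^ card {i. i < m \<and> w i} * (1 - t) ^ (m - card {i. i < m \<and> w i})"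
proof -
  have diff: "{..<m} \<inter> - {i. w i} = {..<m} - {i. i < m \<and> w i}"
    by auto
  have "card ({..<m} \<inter> - {i. w i}) = m - card {i. i < m \<and> w i}"
    unfolding diff by (subst card_Diff_subset) auto
  moreover have "{..<m} \<inter> {i. w i} = {i. i < m \<and> w i}"
    by auto
  ultimately show ?thesis
    unfolding bernoulli_weight_def by (simp add: prod.If_cases)
qed

lemma (in root_residue) has_residue_bernoulli_weight:
  "has_residue x k \<Longrightarrow> has_residue (bernoulli_weight x m w) (bernoulli_weight k m w)"
  unfolding bernoulli_weight_def
  by (intro has_residue_prod) (auto intro: has_residue_diff has_residue_of_int[of 1, simplified])

lemma one_minus_power_cong:
  fixes p t :: int
  assumes "p dvd t"
  shows "[(1 - t) ^ k = 1] (mod p)"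
  using cong_pow[of "1 - t" 1 p k] assms by (simp add: cong_iff_dvd_diff)

lemma mult_one_minus_power_cong:
  fixes p t :: int
  assumes "p dvd t"
  shows "[t * (1 - t) ^ k = t] (mod p^2)"
proof -
  obtain i where "t = p * i"
    using assms ..
  moreover obtain j where "(1 - t) ^ k - 1 = p * j"
    using one_minus_power_cong[OF assms, of k] by (auto simp: cong_iff_dvd_diff)
  ultimately have "t * (1 - t) ^ k - t = p^2 * (i * j)"
    by (simp add: power2_eq_square algebra_simps)
  then show ?thesis
    by (simp add: cong_iff_dvd_diff)
qed

section \<open>Cylinders and the Bernoulli measures\<close>

definition cylinder :: "nat \<Rightarrow> (nat \<Rightarrow> bool) \<Rightarrow> (nat \<Rightarrow> bool) set" where
  "cylinder n x = {y. \<forall>i<n. y i = x i}"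

definition supported_below :: "nat \<Rightarrow> (nat \<Rightarrow> bool) set" where
  "supported_below m = {w. \<forall>i. w i \<longrightarrow> i < m}"

definition depends_on_prefix :: "nat \<Rightarrow> (nat \<Rightarrow> bool) set \<Rightarrow> bool" where
  "depends_on_prefix m V \<longleftrightarrow> (\<forall>x\<in>V. cylinder m x \<subseteq> V)"

lemma self_in_cylinder [simp]: "x \<in> cylinder n x"
  by (simp add: cylinder_def)

lemma cylinder_antimono: "m \<le> n \<Longrightarrow> cylinder n x \<subseteq> cylinder m x"
  by (auto simp: cylinder_def)

lemma cylinder_eq_of_mem: "y \<in> cylinder n x \<Longrightarrow> cylinder n y = cylinder n x"
  by (auto simp: cylinder_def)

lemma finite_supported_below: "finite (supported_below m)"
proof -
  have "supported_below m \<subseteq> (\<lambda>S i. i \<in> S) ` Pow {..<m}"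
  proof
    fix w assume "w \<in> supported_below m"
    then have "{i. w i} \<in> Pow {..<m}"
      by (auto simp: supported_below_def)
    then show "w \<in> (\<lambda>S i. i \<in> S) ` Pow {..<m}"
      by (rule image_eqI[rotated]) simp
  qed
  then show ?thesis
    by (rule finite_subset) simp
qed

lemma depends_on_prefix_eq_UN:
  assumes "depends_on_prefix m V"
  shows "V = (\<Union>w\<in>supported_below m \<inter> V. cylinder m w)"
proof
  show "V \<subseteq> (\<Union>w\<in>supported_below m \<inter> V. cylinder m w)"
  proof
    fix x assume "x \<in> V"
    define w where "w i \<longleftrightarrow> i < m \<and> x i" for i
    have "x \<in> cylinder m w" "w \<in> supported_below m"
      by (simp_all add: w_def cylinder_def supported_below_def)
    moreover have "w \<in> V"
      using assms \<open>x \<in> V\<close> cylinder_eq_of_mem[OF \<open>x \<in> cylinder m w\<close>] self_in_cylinder[of w m]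
      unfolding depends_on_prefix_def by blast
    ultimately show "x \<in> (\<Union>w\<in>supported_below m \<inter> V. cylinder m w)"
      by blast
  qed
qed (use assms in \<open>auto simp: depends_on_prefix_def\<close>)

lemma disjoint_family_on_cylinder: "disjoint_family_on (cylinder m) (supported_below m)"
  unfolding disjoint_family_on_def
proof (intro ballI impI)
  fix v w assume "v \<in> supported_below m" "w \<in> supported_below m" "v \<noteq> w"
  then obtain i where "v i \<noteq> w i"
    by blast
  moreover from this have "i < m"
    using \<open>v \<in> supported_below m\<close> \<open>w \<in> supported_below m\<close>
    by (auto simp: supported_below_def)
  ultimately show "cylinder m v \<inter> cylinder m w = {}"
    by (auto simp: cylinder_def)
qed

lemma prob_space_bernoulli_measure: "prob_space (bernoulli_measure t)"
  unfolding bernoulli_measure_def by (rule prob_space_PiM) (simp add: prob_space_measure_pmf)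

lemma cylinder_eq_prod_emb:
  "cylinder n x = prod_emb UNIV (\<lambda>_. measure_pmf (bernoulli_pmf t)) {..<n} (PiE {..<n} (\<lambda>i. {x i}))"
  by (auto simp: cylinder_def prod_emb_def space_PiM PiE_def extensional_def Pi_def)

lemma cylinder_in_sets: "cylinder n x \<in> sets (bernoulli_measure t)"
  unfolding cylinder_eq_prod_emb[of _ _ t] bernoulli_measure_def by (rule sets_PiM_I) auto

lemma measure_bernoulli_cylinder:
  assumes "0 \<le> t" "t \<le> 1"
  shows "measure (bernoulli_measure t) (cylinder n x) = bernoulli_weight t n x"
proof -
  interpret product_prob_space "\<lambda>_::nat. measure_pmf (bernoulli_pmf t)" UNIV
    by (simp add: product_prob_space_def product_sigma_finite_def product_prob_space_axioms_def
        prob_space_measure_pmf prob_space_imp_sigma_finite)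
  have "emeasure (bernoulli_measure t) (cylinder n x)
      = (\<Prod>i<n. emeasure (measure_pmf (bernoulli_pmf t)) {x i})"
    unfolding cylinder_eq_prod_emb[of _ _ t] bernoulli_measure_def by (rule emeasure_PiM_emb) auto
  also have "\<dots> = ennreal (bernoulli_weight t n x)"
    using assms unfolding bernoulli_weight_def
    by (auto simp: emeasure_pmf_single prod_ennreal[symmetric] intro!: prod.cong)
  finally show ?thesis
    using assms by (simp add: measure_def bernoulli_weight_def prod_nonneg)
qed

lemma depends_on_prefix_in_sets:
  assumes "depends_on_prefix m V"
  shows "V \<in> sets (bernoulli_measure t)"
  using depends_on_prefix_eq_UN[OF assms] finite_supported_below cylinder_in_sets
  by (metis (no_types, lifting) finite_Int sets.finite_UN)

lemma measure_depends_on_prefix: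
  assumes "depends_on_prefix m V" "0 \<le> t" "t \<le> 1"
  shows "measure (bernoulli_measure t) V = (\<Sum>w\<in>supported_below m \<inter> V. bernoulli_weight t m w)"
proof -
  interpret prob_space "bernoulli_measure t"
    by (rule prob_space_bernoulli_measure)
  have "measure (bernoulli_measure t) V
      = measure (bernoulli_measure t) (\<Union>w\<in>supported_below m \<inter> V. cylinder m w)"
    using depends_on_prefix_eq_UN[OF assms(1)] by simp
  also have "\<dots> = (\<Sum>w\<in>supported_below m \<inter> V. measure (bernoulli_measure t) (cylinder m w))"
    using finite_supported_below cylinder_in_sets disjoint_family_on_cylinder
    by (intro finite_measure_finite_Union) (auto intro: disjoint_family_on_mono)
  finally show ?thesis
    using assms(2,3) by (simp add: measure_bernoulli_cylinder)
qed

lemma topspace_Cantor_top [simp]: "topspace Cantor_top = UNIV"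
  by (simp add: Cantor_top_def PiE_UNIV_domain)

lemma cylinder_eq_PiE: "cylinder n x = PiE UNIV (\<lambda>i. if i < n then {x i} else UNIV)"
  by (auto simp: cylinder_def PiE_def extensional_def Pi_def)

lemma openin_cylinder: "openin Cantor_top (cylinder n x)"
proof -
  have "finite {i. (if i < n then {x i} else UNIV) \<noteq> (UNIV :: bool set)}"
    by (rule finite_subset[of _ "{..<n}"]) auto
  then show ?thesis
    unfolding Cantor_top_def cylinder_eq_PiE by (simp add: openin_PiE_gen)
qed

lemma closedin_cylinder: "closedin Cantor_top (cylinder n x)"
  unfolding Cantor_top_def cylinder_eq_PiE by (simp add: closedin_product_topology)

lemma openin_imp_cylinder_subset:
  assumes "openin Cantor_top V" "x \<in> V"
  obtains n where "cylinder n x \<subseteq> V"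
proof -
  obtain U where U: "finite {i. U i \<noteq> UNIV}" "x \<in> PiE UNIV U" "PiE UNIV U \<subseteq> V"
    using assms unfolding Cantor_top_def openin_product_topology_alt by auto
  then obtain n where n: "{i. U i \<noteq> UNIV} \<subseteq> {..<n}"
    using finite_nat_bounded by blast
  have "cylinder n x \<subseteq> PiE UNIV U"
    using U(2) n by (fastforce simp: cylinder_def PiE_def Pi_def extensional_def)
  then show ?thesis
    using U(3) by (intro that) (rule order_trans)
qed

lemma compact_space_Cantor_top: "compact_space Cantor_top"
  unfolding Cantor_top_def by (simp add: compact_space_product_topology compact_space_discrete_topology)

lemma clopen_depends_on_prefix:
  assumes "openin Cantor_top V" "closedin Cantor_top V"
  obtains m where "depends_on_prefix m V"
proof -
  have "\<forall>x\<in>V. \<exists>n. cylinder n x \<subseteq> V"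
    using openin_imp_cylinder_subset[OF assms(1)] by metis
  then obtain N where N: "\<And>x. x \<in> V \<Longrightarrow> cylinder (N x) x \<subseteq> V"
    by metis
  have "compactin Cantor_top V"
    using closedin_compact_space[OF compact_space_Cantor_top assms(2)] .
  moreover have "V \<subseteq> \<Union>((\<lambda>x. cylinder (N x) x) ` V)"
    by auto
  ultimately obtain \<F> where \<F>: "finite \<F>" "\<F> \<subseteq> (\<lambda>x. cylinder (N x) x) ` V" "V \<subseteq> \<Union>\<F>"
    using compactinD[of Cantor_top V "(\<lambda>x. cylinder (N x) x) ` V"] openin_cylinder by blast
  then obtain G where G: "finite G" "G \<subseteq> V" "V \<subseteq> (\<Union>x\<in>G. cylinder (N x) x)"
    using finite_subset_image[OF \<F>(1,2)] by blast
  define m where "m = Max (N ` G)"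
  have "cylinder m x \<subseteq> V" if "x \<in> V" for x
  proof -
    obtain g where g: "g \<in> G" "x \<in> cylinder (N g) g"
      using G(3) \<open>x \<in> V\<close> by blast
    have "cylinder m x \<subseteq> cylinder (N g) x"
      using G(1) g(1) unfolding m_def by (intro cylinder_antimono) simp
    also have "\<dots> = cylinder (N g) g"
      using cylinder_eq_of_mem[OF g(2)] .
    finally show ?thesis
      using N G(2) g(1) by blast
  qed
  then show ?thesis
    using that unfolding depends_on_prefix_def by blast
qed

section \<open>Counting unit sequences modulo 25\<close>

definition unit_seq :: "nat \<Rightarrow> nat \<Rightarrow> bool" where
  "unit_seq j = (\<lambda>i. i = j)"

lemma inj_unit_seq: "inj unit_seq"
  by (rule injI) (metis unit_seq_def)

lemma card_ones_pos:
  assumes "w \<in> supported_below m" "w \<noteq> (\<lambda>_. False)"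
  shows "0 < card {i. i < m \<and> w i}"
proof -
  obtain i where "w i"
    using assms(2) by blast
  with assms(1) have "i \<in> {i. i < m \<and> w i}"
    by (simp add: supported_below_def)
  then show ?thesis
    by (auto simp: card_gt_0_iff)
qed

lemma sum_bernoulli_weight_cong:
  fixes p t :: int
  assumes "p dvd t" "W \<subseteq> supported_below m"
  shows "[(\<Sum>w\<in>W. bernoulli_weight t m w) = (if (\<lambda>_. False) \<in> W then 1 else 0)] (mod p)"
proof -
  have "[bernoulli_weight t m w = (if w = (\<lambda>_. False) then 1 else 0)] (mod p)" if "w \<in> W" for w
  proof (cases "w = (\<lambda>_. False)")
    case True
    then show ?thesis
      using one_minus_power_cong[OF assms(1)] by (simp add: bernoulli_weight_def)
  next
    case False
    then have "t dvd t ^ card {i. i < m \<and> w i}"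
      using card_ones_pos assms(2) that by (blast intro: dvd_power)
    then have "p dvd t ^ card {i. i < m \<and> w i}"
      by (rule dvd_trans[OF assms(1)])
    then show ?thesis
      using False by (simp add: bernoulli_weight_eq_power cong_0_iff)
  qed
  then have "[(\<Sum>w\<in>W. bernoulli_weight t m w) = (\<Sum>w\<in>W. if w = (\<lambda>_. False) then 1 else 0)] (mod p)"
    by (rule cong_sum)
  then show ?thesis
    using finite_subset[OF assms(2) finite_supported_below] by simp
qed

lemma sum_bernoulli_weight_cong_square:
  fixes p t :: int
  assumes "p dvd t" "W \<subseteq> supported_below m" "(\<lambda>_. False) \<notin> W"
  shows "[(\<Sum>w\<in>W. bernoulli_weight t m w) = t * int (card {j. unit_seq j \<in> W})] (mod p^2)"
proof -
  have "[bernoulli_weight t m w = (if w \<in> range unit_seq then t else 0)] (mod p^2)" if w: "w \<in> W" for w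
  proof (cases "w \<in> range unit_seq")
    case True
    then obtain j where j: "w = unit_seq j" by blast
    then have "{i. i < m \<and> w i} = {j}"
      using assms(2) w by (auto simp: unit_seq_def supported_below_def)
    then show ?thesis
      using True mult_one_minus_power_cong[OF assms(1)] by (simp add: bernoulli_weight_eq_power)
  next
    case False
    have "w \<noteq> (\<lambda>_. False)"
      using assms(3) w by auto
    then obtain i where "w i"
      by blast
    moreover obtain j where "w j \<noteq> unit_seq i j"
      using False by blast
    ultimately have "{i, j} \<subseteq> {i. i < m \<and> w i}" "i \<noteq> j"
      using assms(2) w by (auto simp: unit_seq_def supported_below_def)
    then have "2 \<le> card {i. i < m \<and> w i}"
      by (metis card_2_iff card_mono finite_Collect_conjI finite_Collect_less_nat)
    then have "p^2 dvd t ^ card {i. i < m \<and> w i}"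
      by (rule dvd_power_le[OF assms(1)])
    then show ?thesis
      using False by (simp add: bernoulli_weight_eq_power cong_0_iff)
  qed
  then have "[(\<Sum>w\<in>W. bernoulli_weight t m w) = (\<Sum>w\<in>W. if w \<in> range unit_seq then t else 0)] (mod p^2)"
    by (rule cong_sum)
  also have "(\<Sum>w\<in>W. if w \<in> range unit_seq then t else 0) = t * int (card (W \<inter> range unit_seq))"
    using finite_subset[OF assms(2) finite_supported_below] by (simp add: sum.inter_restrict[symmetric])
  also have "W \<inter> range unit_seq = unit_seq ` {j. unit_seq j \<in> W}"
    by auto
  finally show ?thesis
    using card_image[OF inj_on_subset[OF inj_unit_seq subset_UNIV]] by simp
qed

lemma sum_bernoulli_weight_cong_10:
  assumes "W \<subseteq> supported_below m" and sum: "[(\<Sum>w\<in>W. bernoulli_weight (-180 :: int) m w) = 10] (mod 25)"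
  shows "(\<lambda>_. False) \<notin> W" "\<exists>i j. i \<noteq> j \<and> unit_seq i \<in> W \<and> unit_seq j \<in> W"
proof -
  let ?S = "\<Sum>w\<in>W. bernoulli_weight (-180 :: int) m w"
  let ?J = "{j. unit_seq j \<in> W}"
  have "[(if (\<lambda>_. False) \<in> W then 1 else 0) = ?S] (mod 5)"
    using sum_bernoulli_weight_cong[of 5 "-180" W m] assms(1) by (simp add: cong_sym_eq)
  also have "[?S = 10] (mod 5)"
    using cong_dvd_modulus[OF sum, of 5] by simp
  finally show zero: "(\<lambda>_. False) \<notin> W"
    by (auto simp: cong_def)
  have "[-180 * int (card ?J) = ?S] (mod 25)"
    using sum_bernoulli_weight_cong_square[of 5 "-180" W m] zero assms(1) by (simp add: cong_sym_eq)
  also note sum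
  finally have "[-180 * int (card ?J) = 10] (mod 25)" .
  moreover have "\<not> c \<le> Suc 0" if "[-180 * int c = 10] (mod 25)" for c :: nat
  proof
    assume "c \<le> Suc 0"
    then consider "c = 0" | "c = Suc 0"
      by linarith
    then show False
      using that by cases (simp_all add: cong_def)
  qed
  ultimately have "\<not> card ?J \<le> Suc 0"
    by blast
  moreover from this have "finite ?J"
    using card.infinite by force
  ultimately show "\<exists>i j. i \<noteq> j \<and> unit_seq i \<in> W \<and> unit_seq j \<in> W"
    using card_le_Suc0_iff_eq[of ?J] by auto
qed

lemma unit_seq_in_cylinder_zero: "m \<le> j \<Longrightarrow> unit_seq j \<in> cylinder m (\<lambda>_. False)"
  by (simp add: unit_seq_def cylinder_def)

lemma finite_unit_seqs_in:
  assumes "depends_on_prefix m V" "(\<lambda>_. False) \<notin> V"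
  shows "finite {j. unit_seq j \<in> V}"
proof (rule finite_subset)
  show "{j. unit_seq j \<in> V} \<subseteq> {..<m}"
  proof
    fix j assume "j \<in> {j. unit_seq j \<in> V}"
    then have "cylinder m (unit_seq j) \<subseteq> V"
      using assms(1) by (simp add: depends_on_prefix_def)
    moreover have "(\<lambda>_. False) \<in> cylinder m (unit_seq j)" if "m \<le> j"
      using cylinder_eq_of_mem[OF unit_seq_in_cylinder_zero[OF that]] by simp
    ultimately show "j \<in> {..<m}"
      using assms(2) by force
  qed
qed simp

lemma cylinder_separates_finite:
  assumes "finite S"
  obtains n where "\<And>y. y \<in> S \<Longrightarrow> y \<in> cylinder n x \<Longrightarrow> y = x"
  using assms
proof (induction S arbitrary: thesis rule: finite_induct)
  case empty
  then show ?case by blast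
next
  case (insert z S)
  obtain n where n: "\<And>y. y \<in> S \<Longrightarrow> y \<in> cylinder n x \<Longrightarrow> y = x"
    using insert.IH by blast
  show ?case
  proof (cases "z = x")
    case True
    then show ?thesis
      using insert.prems n by blast
  next
    case False
    then obtain i where "z i \<noteq> x i"
      by blast
    moreover have "i < max n (Suc i)"
      by simp
    ultimately have "z \<notin> cylinder (max n (Suc i)) x"
      unfolding cylinder_def by blast
    moreover have "cylinder (max n (Suc i)) x \<subseteq> cylinder n x"
      by (rule cylinder_antimono) simp
    ultimately show ?thesis
      using insert.prems n by blast
  qed
qed

lemma image_cylinder_unit_seq_unique:
  assumes "inj h" "depends_on_prefix m (h ` cylinder 1 x)" "(\<lambda>_. False) \<notin> h ` cylinder 1 x"
  obtains M where "1 \<le> M"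
    "\<And>i j. unit_seq i \<in> h ` cylinder M x \<Longrightarrow> unit_seq j \<in> h ` cylinder M x \<Longrightarrow> i = j"
proof -
  define J where "J = {j. unit_seq j \<in> h ` cylinder 1 x}"
  have "finite (h -` unit_seq ` J)"
    using finite_unit_seqs_in[OF assms(2,3)] assms(1) unfolding J_def by (simp add: finite_vimageI)
  then obtain n where n: "\<And>y. y \<in> h -` unit_seq ` J \<Longrightarrow> y \<in> cylinder n x \<Longrightarrow> y = x"
    using cylinder_separates_finite[where x = x] by blast
  define M where "M = max 1 n"
  have "unit_seq i = h x" if i: "unit_seq i \<in> h ` cylinder M x" for i
  proof -
    obtain y where y: "y \<in> cylinder M x" "unit_seq i = h y"
      using i by blast
    have "y \<in> cylinder 1 x" "y \<in> cylinder n x"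
      using y(1) cylinder_antimono[of 1 M x] cylinder_antimono[of n M x] unfolding M_def by auto
    then have "y \<in> h -` unit_seq ` J"
      using y(2) unfolding J_def by (metis image_eqI mem_Collect_eq vimageI)
    then show ?thesis
      using n \<open>y \<in> cylinder n x\<close> y(2) by blast
  qed
  then have "\<And>i j. unit_seq i \<in> h ` cylinder M x \<Longrightarrow> unit_seq j \<in> h ` cylinder M x \<Longrightarrow> i = j"
    using inj_unit_seq by (metis injD)
  moreover have "1 \<le> M"
    unfolding M_def by simp
  ultimately show ?thesis
    using that by blast
qed

section \<open>Homeomorphisms carrying mu_r to mu_s\<close>

lemma measure_image_clopen:
  assumes hom: "homeomorphic_map Cantor_top Cantor_top h"
    and preserving: "\<forall>A \<in> sets (bernoulli_measure s).
      emeasure (bernoulli_measure s) A = emeasure (bernoulli_measure r) (h -` A)"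
    and "openin Cantor_top U" "closedin Cantor_top U"
  obtains m where "depends_on_prefix m (h ` U)"
    "measure (bernoulli_measure s) (h ` U) = measure (bernoulli_measure r) U"
proof -
  have "openin Cantor_top (h ` U)" "closedin Cantor_top (h ` U)"
    using assms(3,4) homeomorphic_map_openness[OF hom] homeomorphic_map_closedness[OF hom] by simp_all
  then obtain m where m: "depends_on_prefix m (h ` U)"
    by (rule clopen_depends_on_prefix)
  have "inj h"
    using homeomorphic_imp_injective_map[OF hom] by simp
  then have "emeasure (bernoulli_measure s) (h ` U) = emeasure (bernoulli_measure r) U"
    using preserving depends_on_prefix_in_sets[OF m] by (simp add: inj_vimage_image_eq)
  then show ?thesis
    using that m by (simp add: measure_def)
qed

lemma image_cylinder_weight_cong:
  fixes r s :: real
  assumes cubic: "12 * r^3 - 24 * r^2 + 18 * r - 5 = 0"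
    and "0 \<le> r" "r \<le> 1" "0 \<le> s" "s \<le> 1" "s = 2 * r * (1 - r)"
    and hom: "homeomorphic_map Cantor_top Cantor_top h"
    and preserving: "\<forall>A \<in> sets (bernoulli_measure s).
      emeasure (bernoulli_measure s) A = emeasure (bernoulli_measure r) (h -` A)"
    and "1 \<le> M"
  obtains m where "depends_on_prefix m (h ` cylinder M (unit_seq 0))"
    "[(\<Sum>w\<in>supported_below m \<inter> h ` cylinder M (unit_seq 0). bernoulli_weight (-180 :: int) m w) = 10] (mod 25)"
proof -
  interpret root_residue cubic r 10 25
    using cubic by (rule root_residue_cubic)
  let ?C = "cylinder M (unit_seq 0)"
  have ones: "{i. i < M \<and> unit_seq 0 i} = {0}"
    using \<open>1 \<le> M\<close> by (auto simp: unit_seq_def)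
  obtain m where m: "depends_on_prefix m (h ` ?C)"
    and meq: "measure (bernoulli_measure s) (h ` ?C) = measure (bernoulli_measure r) ?C"
    using measure_image_clopen[OF hom preserving openin_cylinder closedin_cylinder] by blast
  have "has_residue s (2 * 10 * (1 - 10))"
    unfolding \<open>s = _\<close>
    using has_residue_mult[OF has_residue_mult[OF has_residue_of_int[of 2] has_residue_root]
        has_residue_diff[OF has_residue_of_int[of 1] has_residue_root]] by simp
  then have "has_residue (measure (bernoulli_measure s) (h ` ?C))
      (\<Sum>w\<in>supported_below m \<inter> h ` ?C. bernoulli_weight (-180 :: int) m w)"
    unfolding measure_depends_on_prefix[OF m \<open>0 \<le> s\<close> \<open>s \<le> 1\<close>]
    by (auto intro!: has_residue_sum has_residue_bernoulli_weight)
  moreover have "has_residue (measure (bernoulli_measure r) ?C) (bernoulli_weight 10 M (unit_seq 0))"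
    unfolding measure_bernoulli_cylinder[OF \<open>0 \<le> r\<close> \<open>r \<le> 1\<close>]
    by (intro has_residue_bernoulli_weight has_residue_root)
  ultimately have "[(\<Sum>w\<in>supported_below m \<inter> h ` ?C. bernoulli_weight (-180 :: int) m w)
      = bernoulli_weight 10 M (unit_seq 0)] (mod 25)"
    unfolding meq by (rule has_residue_unique)
  also have "bernoulli_weight (10 :: int) M (unit_seq 0) = 10 * (1 - 10) ^ (M - 1)"
    using ones by (simp add: bernoulli_weight_eq_power)
  also have "[\<dots> = 10] (mod 25)"
    using mult_one_minus_power_cong[of 5 10 "M - 1"] by simp
  finally show ?thesis
    using that m by simp
qed

theorem mainTheorem1:
  fixes r s :: real
  assumes "0 < r" "r < 1" "0 < s" "s < 1"
    and "s = 2 * r * (1 - r)"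
    and "r = 3 * s * (1 - s)^2 + 3 * s^2 * (1 - s)"
  shows "\<not> (\<exists>h. homeomorphic_map Cantor_top Cantor_top h \<and>
            (\<forall>A \<in> sets (bernoulli_measure s).
               emeasure (bernoulli_measure s) A = emeasure (bernoulli_measure r) (h -` A)))"
proof (intro notI, elim exE conjE)
  fix h
  assume hom: "homeomorphic_map Cantor_top Cantor_top h"
    and preserving: "\<forall>A \<in> sets (bernoulli_measure s).
      emeasure (bernoulli_measure s) A = emeasure (bernoulli_measure r) (h -` A)"
  have "r * (12 * r^3 - 24 * r^2 + 18 * r - 5) = r - (3 * s * (1 - s)^2 + 3 * s^2 * (1 - s))"
    unfolding assms(5) by (simp add: algebra_simps power2_eq_square power3_eq_cube)
  then have cubic: "12 * r^3 - 24 * r^2 + 18 * r - 5 = 0"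
    using assms(1,6) by simp
  note weight_cong = image_cylinder_weight_cong[OF cubic _ _ _ _ assms(5) hom preserving]
  obtain m1 where dep1: "depends_on_prefix m1 (h ` cylinder 1 (unit_seq 0))"
    and sum1: "[(\<Sum>w\<in>supported_below m1 \<inter> h ` cylinder 1 (unit_seq 0).
      bernoulli_weight (-180 :: int) m1 w) = 10] (mod 25)"
    using weight_cong[of 1] assms(1-4) by auto
  have "(\<lambda>_. False) \<notin> h ` cylinder 1 (unit_seq 0)"
    using sum_bernoulli_weight_cong_10(1)[OF Int_lower1 sum1] by (simp add: supported_below_def)
  moreover have "inj h"
    using homeomorphic_imp_injective_map[OF hom] by simp
  ultimately obtain M where "1 \<le> M" and unique:
    "\<And>i j. unit_seq i \<in> h ` cylinder M (unit_seq 0) \<Longrightarrow> unit_seq j \<in> h ` cylinder M (unit_seq 0) \<Longrightarrow> i = j"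
    using image_cylinder_unit_seq_unique dep1 by blast
  obtain m where "[(\<Sum>w\<in>supported_below m \<inter> h ` cylinder M (unit_seq 0).
      bernoulli_weight (-180 :: int) m w) = 10] (mod 25)"
    using weight_cong[OF _ _ _ _ \<open>1 \<le> M\<close>] assms(1-4) by auto
  then show False
    using sum_bernoulli_weight_cong_10(2)[OF Int_lower1] unique by blast
qed

end
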